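(* Let $\mathcal H$ be a real Hilbert space, let $f:\mathcal H\to\mathbb R$ be convex and continuously differentiable with $\operatorname{argmin}_{\mathcal H} f\neq\emptyset$, let $t_0>0$ and $\alpha\ge 0$. Let $u:[t_0,+\infty[\to\mathcal H$ be a (classical, $\mathcal C^3$) solution of $$\text{(TOGES-V)}\qquad \dddot u(t)+\frac{\alpha+7}{t}\ddot u(t)+\frac{5(\alpha+1)}{t^2}\dot u(t)+\nabla f\Big(u(t)+\tfrac14 t\dot u(t)\Big)=0,\quad t\ge t_0.$$ (a) If $\alpha\ge 3$, then as $t\to+\infty$: (i) $f\big(u(t)+\tfrac14 t\dot u(t)\big)-\inf_{\mathcal H} f=\mathcal O(1/t^3)$; (ii) $f(u(t))-\inf_{\mathcal H} f=\mathcal O(1/t^3)$. (b) If $\alpha>3$, then as $t\to+\infty$: (iii) $f\big(u(t)+\tfrac14 t\dot u(t)\big)-\inf_{\mathcal H} f=o(1/t^3)$; (iv) $f(u(t))-\inf_{\mathcal H} f=o(1/t^3)$; (v) $u(t)$ converges weakly in $\mathcal H$ to some $u_\infty\in\operatorname{argmin}_{\mathcal H} f$.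
   Context: $\dot u,\ddot u,\dddot u$ denote the first, second and third time derivatives of $u$; $\nabla f$ is the gradient of $f$. *)

theory Defs
  imports "HOL-Analysis.Analysis" "HOL-Library.Landau_Symbols"
begin

definition argmin_set :: "('a \<Rightarrow> real) \<Rightarrow> 'a set" where
  "argmin_set f = {x. \<forall>y. f x \<le> f y}"

definition weakly_tendsto_at_top :: "(real \<Rightarrow> 'a::real_inner) \<Rightarrow> 'a \<Rightarrow> bool" where
  "weakly_tendsto_at_top u l \<longleftrightarrow> (\<forall>y. ((\<lambda>t. inner (u t) y) \<longlongrightarrow> inner l y) at_top)"

end

theory Submission
  imports Defs "HOL-Library.Diagonal_Subsequence"
begin

text \<open>Put \<open>v(t) = u(t) + t/4 \<cdot> u'(t)\<close>. Then (TOGES-V) becomes the second-order system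
  \<open>t v'' + (\<alpha>+1) v' + t\<^sup>2/4 \<nabla>f(v) = 0\<close>. For a minimizer \<open>z\<close> and \<open>3 \<le> \<lambda> \<le> \<alpha>\<close> the energy
  \<open>E\<^sub>\<lambda> = t\<^sup>3/4 (f(v) - min f) + \<parallel>\<lambda>(v - z) + t v'\<parallel>\<^sup>2/2 + \<lambda>(\<alpha> - \<lambda>)/2 \<parallel>v - z\<parallel>\<^sup>2\<close> is nonincreasing,
  so \<open>f(v) - min f = O(1/t\<^sup>3)\<close>. Convexity gives \<open>\<phi> + t/4 \<phi>' \<le> f(v) - min f\<close> for
  \<open>\<phi> = f(u) - min f\<close>, i.e. \<open>(t\<^sup>4 \<phi>)' \<le> 4t\<^sup>3 (f(v) - min f)\<close>, which transfers the rate to \<open>u\<close>.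
  For \<open>\<alpha> > 3\<close> the energies for two values of \<open>\<lambda>\<close> separate \<open>E\<^sub>\<lambda>\<close> into a part
  \<open>t\<^sup>3/4 (f(v) - min f) + t\<^sup>2/2 \<parallel>v'\<parallel>\<^sup>2\<close>, which must tend to \<open>0\<close> because \<open>E\<^sub>\<lambda>\<close> for \<open>3 < \<lambda> < \<alpha>\<close>
  dissipates at least a fixed multiple of it divided by \<open>t\<close>, and an anchor part
  \<open>t\<langle>v - z, v'\<rangle> + \<alpha>/2 \<parallel>v - z\<parallel>\<^sup>2\<close>, whose convergence gives convergence of \<open>\<parallel>v - z\<parallel>\<close>.
  Opial's lemma then yields weak convergence of \<open>v\<close>, and hence of \<open>u\<close>.\<close>

section \<open>Hilbert spaces\<close>

lemma parallelogram_midpoint: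
  fixes y a b :: "'a::real_inner"
  shows "(norm (a - b))\<^sup>2
    = 2 * (norm (y - a))\<^sup>2 + 2 * (norm (y - b))\<^sup>2 - 4 * (norm (y - (1/2) *\<^sub>R (a + b)))\<^sup>2"
  unfolding power2_norm_eq_inner
  by (simp add: inner_diff_left inner_diff_right inner_add_left inner_add_right
      inner_commute algebra_simps)

lemma power2_norm_scaleR_add:
  fixes x y :: "'a::real_inner"
  shows "(norm (a *\<^sub>R x + b *\<^sub>R y))\<^sup>2 = a\<^sup>2 * (norm x)\<^sup>2 + 2 * a * b * inner x y + b\<^sup>2 * (norm y)\<^sup>2"
  unfolding power2_norm_eq_inner
  by (simp add: inner_add_left inner_add_right inner_commute power2_eq_square algebra_simps)

lemma Cauchy_if_norm_diff_le_inverse: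
  fixes c :: "nat \<Rightarrow> 'a::real_normed_vector"
  assumes K: "\<And>j k. (norm (c j - c k))\<^sup>2 \<le> K * (1 / (real j + 1) + 1 / (real k + 1))"
  shows "Cauchy c"
proof (rule CauchyI)
  fix e :: real assume e: "e > 0"
  have K0: "K \<ge> 0" using K[of 0 0] by simp
  obtain N :: nat where N: "real N > 2 * K / e\<^sup>2" using reals_Archimedean2 by blast
  show "\<exists>M. \<forall>m\<ge>M. \<forall>n\<ge>M. norm (c m - c n) < e"
  proof (intro exI[of _ N] allI impI)
    fix m n assume mn: "m \<ge> N" "n \<ge> N"
    have "1 / (real m + 1) \<le> 1 / (real N + 1)" "1 / (real n + 1) \<le> 1 / (real N + 1)"
      using mn by (auto intro!: divide_left_mono)
    hence "1 / (real m + 1) + 1 / (real n + 1) \<le> 2 / (real N + 1)" by simp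
    hence "(norm (c m - c n))\<^sup>2 \<le> K * (2 / (real N + 1))"
      using K[of m n] mult_left_mono[OF _ K0] by (meson order_trans)
    also have "\<dots> < e\<^sup>2"
    proof -
      have e2: "e\<^sup>2 > 0" using e by simp
      have "2 * K < real N * e\<^sup>2" using N e2 by (simp add: pos_divide_less_eq)
      also have "\<dots> < e\<^sup>2 * (real N + 1)" using e2 by (simp add: algebra_simps)
      finally show ?thesis by (simp add: pos_divide_less_eq)
    qed
    finally show "norm (c m - c n) < e" by (rule power2_less_imp_less) (use e in auto)
  qed
qed

lemma Cauchy_minimizing_sequence:
  fixes y :: "'a::real_inner"
  assumes sub: "subspace C" and cC: "\<And>k. c k \<in> C"
    and dle: "\<And>x. x \<in> C \<Longrightarrow> d \<le> norm (y - x)" and d0: "0 \<le> d"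
    and near: "\<And>k. norm (y - c k) < d + 1 / (real k + 1)"
  shows "Cauchy c"
proof (rule Cauchy_if_norm_diff_le_inverse)
  have sq: "(norm (y - c k))\<^sup>2 \<le> d\<^sup>2 + (2 * d + 1) / (real k + 1)" for k
  proof -
    define e where "e = 1 / (real k + 1)"
    have e: "0 < e" "e \<le> 1" by (auto simp: e_def field_simps)
    have "(norm (y - c k))\<^sup>2 \<le> (d + e)\<^sup>2"
      using near[of k] by (intro power_mono) (auto simp: e_def)
    also have "\<dots> \<le> d\<^sup>2 + (2 * d + 1) * e" using e d0
      by (simp add: power2_eq_square algebra_simps)
    finally show ?thesis by (simp add: e_def)
  qed
  fix j k
  have "(1/2) *\<^sub>R (c j + c k) \<in> C"
    using sub cC by (intro subspace_mul subspace_add) auto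
  hence "d\<^sup>2 \<le> (norm (y - (1/2) *\<^sub>R (c j + c k)))\<^sup>2" using dle d0 by (intro power_mono) auto
  moreover have "2 * (2 * d + 1) * (1 / (real j + 1) + 1 / (real k + 1))
      = 2 * ((2 * d + 1) / (real j + 1)) + 2 * ((2 * d + 1) / (real k + 1))"
    by (simp add: field_simps)
  ultimately show "(norm (c j - c k))\<^sup>2 \<le> 2 * (2 * d + 1) * (1 / (real j + 1) + 1 / (real k + 1))"
    using parallelogram_midpoint[of "c j" "c k" y] sq[of j] sq[of k] by linarith
qed

lemma closest_point_in_closed_subspace:
  fixes y :: "'a::{real_inner,complete_space}"
  assumes cl: "closed C" and sub: "subspace C"
  shows "\<exists>p\<in>C. \<forall>c\<in>C. norm (y - p) \<le> norm (y - c)"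
proof -
  define d where "d = (INF c\<in>C. norm (y - c))"
  have ne: "(\<lambda>c. norm (y - c)) ` C \<noteq> {}" using subspace_0[OF sub] by blast
  have dle: "d \<le> norm (y - c)" if "c \<in> C" for c
    unfolding d_def using that by (intro cINF_lower bdd_belowI[of _ 0]) auto
  have d0: "d \<ge> 0" unfolding d_def using ne by (intro cINF_greatest) auto
  have "\<exists>c\<in>C. norm (y - c) < d + 1 / (real k + 1)" for k
  proof -
    have "(INF c\<in>C. norm (y - c)) < d + 1 / (real k + 1)" unfolding d_def by simp
    then show ?thesis using cInf_lessD[OF ne] by blast
  qed
  then obtain c where cC: "\<And>k. c k \<in> C" and near: "\<And>k. norm (y - c k) < d + 1 / (real k + 1)"
    by metis
  obtain p where p: "c \<longlonglongrightarrow> p"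
    using Cauchy_minimizing_sequence[OF sub cC dle d0 near] Cauchy_convergent_iff convergent_def by blast
  have "norm (y - p) \<le> d"
  proof (rule tendsto_le[OF trivial_limit_sequentially])
    show "(\<lambda>k. norm (y - c k)) \<longlonglongrightarrow> norm (y - p)" by (intro tendsto_intros p)
    have "(\<lambda>k. 1 / (real k + 1)) \<longlonglongrightarrow> 0"
      using LIMSEQ_Suc[OF lim_inverse_n'] by (simp add: add.commute)
    from tendsto_add[OF tendsto_const[of d] this]
    show "(\<lambda>k. d + 1 / (real k + 1)) \<longlonglongrightarrow> d" by simp
    show "\<forall>\<^sub>F k in sequentially. norm (y - c k) \<le> d + 1 / (real k + 1)"
      using near by (intro always_eventually allI) (simp add: less_imp_le)
  qed
  moreover have "p \<in> C" using closed_sequentially[OF cl] cC p by blast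
  ultimately show ?thesis using dle by force
qed

lemma closest_point_orthogonal:
  fixes y :: "'a::real_inner"
  assumes sub: "subspace C" and pC: "p \<in> C"
    and closest: "\<And>c. c \<in> C \<Longrightarrow> norm (y - p) \<le> norm (y - c)"
    and cC: "c \<in> C"
  shows "inner (y - p) c = 0"
proof (cases "c = 0")
  case False
  define a where "a = inner (y - p) c"
  define s where "s = a / inner c c"
  have cc: "inner c c > 0" using False by simp
  have "p + s *\<^sub>R c \<in> C" using sub pC cC by (intro subspace_add subspace_mul) auto
  hence "(norm (y - p))\<^sup>2 \<le> (norm (y - (p + s *\<^sub>R c)))\<^sup>2" using closest by (intro power_mono) auto
  hence "0 \<le> s * s * inner c c - 2 * s * a"
    by (simp add: power2_norm_eq_inner inner_diff_left inner_diff_right a_def inner_commute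
        algebra_simps)
  also have "s * s * inner c c - 2 * s * a = - (a * a) / inner c c" using cc
    by (simp add: s_def field_simps power2_eq_square)
  finally have "a * a \<le> 0" using cc by (simp add: divide_le_0_iff)
  thus ?thesis unfolding a_def[symmetric] by (metis mult_eq_0_iff order_antisym zero_le_square)
qed simp

lemma orthogonal_projection_exists:
  fixes y :: "'a::{real_inner,complete_space}"
  assumes "closed C" "subspace C"
  shows "\<exists>p\<in>C. \<forall>c\<in>C. inner (y - p) c = 0"
  using closest_point_in_closed_subspace[OF assms] closest_point_orthogonal[OF assms(2)] by metis

lemma riesz_representation:
  fixes L :: "'a::{real_inner,complete_space} \<Rightarrow> real"
  assumes bl: "bounded_linear L"
  shows "\<exists>q. \<forall>y. L y = inner q y"
proof (cases "\<forall>y. L y = 0")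
  case True thus ?thesis by (intro exI[of _ 0]) simp
next
  case False
  then obtain y0 where y0: "L y0 \<noteq> 0" by blast
  interpret L: bounded_linear L by (rule bl)
  define K where "K = {y. L y = 0}"
  have clK: "closed K" unfolding K_def
    by (rule closed_Collect_eq) (auto intro: linear_continuous_on bl)
  have subK: "subspace K" unfolding K_def subspace_def
    by (auto simp: L.add L.scaleR L.zero)
  obtain p where pK: "p \<in> K" and orth: "\<And>c. c \<in> K \<Longrightarrow> inner (y0 - p) c = 0"
    using orthogonal_projection_exists[OF clK subK, of y0] by blast
  define e where "e = y0 - p"
  have Le: "L e = L y0" using pK by (simp add: e_def L.diff K_def)
  have ee: "inner e e > 0" using Le y0 by auto
  show ?thesis
  proof (intro exI[of _ "(L e / inner e e) *\<^sub>R e"] allI)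
    fix y
    have "L (y - (L y / L e) *\<^sub>R e) = 0" using Le y0 by (simp add: L.diff L.scaleR)
    hence "inner e (y - (L y / L e) *\<^sub>R e) = 0" using orth by (simp add: K_def e_def)
    hence "inner e y = (L y / L e) * inner e e" by (simp add: inner_diff_right)
    thus "L y = inner ((L e / inner e e) *\<^sub>R e) y" using ee Le y0 by simp
  qed
qed

lemma subspace_inner_convergent:
  fixes x :: "nat \<Rightarrow> 'a::real_inner"
  shows "subspace {y. convergent (\<lambda>n. inner (x n) y)}"
  unfolding subspace_def
  by (auto simp: inner_add_right convergent_const intro: convergent_add convergent_mult[OF convergent_const])

lemma closed_inner_convergent:
  fixes x :: "nat \<Rightarrow> 'a::real_inner"
  assumes M: "\<And>n. norm (x n) \<le> M"
  shows "closed {y. convergent (\<lambda>n. inner (x n) y)}"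
  unfolding closed_sequential_limits
proof (intro allI impI, elim conjE)
  fix ys l assume ysC: "\<forall>k. ys k \<in> {y. convergent (\<lambda>n. inner (x n) y)}" and ysl: "ys \<longlonglongrightarrow> l"
  have M0: "M \<ge> 0" using M[of 0] norm_ge_zero order_trans by blast
  have "Cauchy (\<lambda>n. inner (x n) l)"
  proof (rule metric_CauchyI)
    fix e :: real assume e: "e > 0"
    obtain k where k: "norm (ys k - l) < e / (4 * (M + 1))"
      using LIMSEQ_D[OF ysl, of "e / (4 * (M + 1))"] e M0 by fastforce
    have "Cauchy (\<lambda>n. inner (x n) (ys k))"
      using ysC by (simp add: Cauchy_convergent_iff)
    moreover have "e / 2 > 0" using e by simp
    ultimately obtain N where N: "\<forall>m\<ge>N. \<forall>n\<ge>N. dist (inner (x m) (ys k)) (inner (x n) (ys k)) < e / 2"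
      using metric_CauchyD by blast
    have close: "\<bar>inner (x n) (l - ys k)\<bar> \<le> e / 4" for n
    proof -
      have "\<bar>inner (x n) (l - ys k)\<bar> \<le> M * norm (l - ys k)"
        using Cauchy_Schwarz_ineq2 M[of n] by (meson mult_right_mono norm_ge_zero order_trans)
      also have "\<dots> \<le> M * (e / (4 * (M + 1)))"
        using k M0 by (intro mult_left_mono) (auto simp: norm_minus_commute)
      also have "\<dots> \<le> e / 4" using M0 e by (simp add: field_simps)
      finally show ?thesis .
    qed
    show "\<exists>N. \<forall>m\<ge>N. \<forall>n\<ge>N. dist (inner (x m) l) (inner (x n) l) < e"
    proof (intro exI[of _ N] allI impI)
      fix m n assume "m \<ge> N" "n \<ge> N"
      hence "\<bar>inner (x m) (ys k) - inner (x n) (ys k)\<bar> < e / 2" using N by (simp add: dist_real_def)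
      moreover have "inner (x m) l - inner (x n) l = inner (x m) (l - ys k) - inner (x n) (l - ys k)
          + (inner (x m) (ys k) - inner (x n) (ys k))"
        by (simp add: inner_diff_right)
      ultimately show "dist (inner (x m) l) (inner (x n) l) < e"
        using close[of m] close[of n] unfolding dist_real_def by linarith
    qed
  qed
  thus "l \<in> {y. convergent (\<lambda>n. inner (x n) y)}" by (simp add: Cauchy_convergent_iff)
qed

lemma weak_limit_exists:
  fixes x :: "nat \<Rightarrow> 'a::{real_inner,complete_space}"
  assumes M: "\<And>n. norm (x n) \<le> M" and conv: "\<And>y. convergent (\<lambda>n. inner (x n) y)"
  shows "\<exists>q. \<forall>y. (\<lambda>n. inner (x n) y) \<longlonglongrightarrow> inner q y"
proof -
  define L where "L y = lim (\<lambda>n. inner (x n) y)" for y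
  have Llim: "(\<lambda>n. inner (x n) y) \<longlonglongrightarrow> L y" for y
    using conv[of y] unfolding L_def by (simp add: convergent_LIMSEQ_iff)
  have "bounded_linear L"
  proof (rule bounded_linear_intro)
    fix a b
    show "L (a + b) = L a + L b"
      using tendsto_add[OF Llim[of a] Llim[of b]] Llim[of "a + b"] LIMSEQ_unique
      by (fastforce simp: inner_add_right)
  next
    fix c :: real and a
    show "L (c *\<^sub>R a) = c *\<^sub>R L a"
      using tendsto_mult_left[OF Llim[of a], of c] Llim[of "c *\<^sub>R a"] LIMSEQ_unique by fastforce
  next
    fix a
    have "\<bar>inner (x n) a\<bar> \<le> M * norm a" for n
      using Cauchy_Schwarz_ineq2 M[of n] by (meson mult_right_mono norm_ge_zero order_trans)
    hence "\<bar>L a\<bar> \<le> M * norm a" by (intro LIMSEQ_le_const2[OF tendsto_rabs[OF Llim]]) blast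
    thus "norm (L a) \<le> norm a * M" by (simp add: mult.commute)
  qed
  then obtain q where "\<And>y. L y = inner q y" using riesz_representation by blast
  thus ?thesis using Llim by metis
qed

lemma diagonal_subseq_inner_convergent:
  fixes x :: "nat \<Rightarrow> 'a::real_inner"
  assumes M: "\<And>n. norm (x n) \<le> M"
  shows "\<exists>r. strict_mono r \<and> (\<forall>m. convergent (\<lambda>n. inner (x (r n)) (x m)))"
proof -
  define P where "P = (\<lambda>m (s::nat\<Rightarrow>nat). convergent (\<lambda>n. inner (x (s n)) (x m)))"
  interpret S: subseqs P
  proof
    fix m and s :: "nat \<Rightarrow> nat"
    have "\<bar>inner (x n) (x m)\<bar> \<le> M * norm (x m)" for n
      using Cauchy_Schwarz_ineq2 M[of n] by (meson mult_right_mono norm_ge_zero order_trans)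
    hence "bounded (range (\<lambda>n. inner (x (s n)) (x m)))"
      unfolding bounded_iff by (intro exI[of _ "M * norm (x m)"]) auto
    then obtain l r where "strict_mono r" "((\<lambda>n. inner (x (s n)) (x m)) \<circ> r) \<longlonglongrightarrow> l"
      using bounded_imp_convergent_subsequence by blast
    thus "\<exists>r'. strict_mono r' \<and> P m (s \<circ> r')"
      by (intro exI[of _ r]) (auto simp: P_def convergent_def o_def)
  qed
  have "convergent (\<lambda>n. inner (x (S.diagseq n)) (x m))" for m
  proof -
    have "P m (S.diagseq \<circ> ((+) (Suc m)))"
    proof (rule S.diagseq_holds)
      fix r' s n assume "strict_mono (r'::nat\<Rightarrow>nat)" "P n s"
      thus "P n (s \<circ> r')"
        unfolding P_def convergent_def o_def using LIMSEQ_subseq_LIMSEQ by (fastforce simp: o_def)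
    qed
    then obtain l where "(\<lambda>n. inner (x (S.diagseq (n + Suc m))) (x m)) \<longlonglongrightarrow> l"
      by (auto simp: P_def convergent_def o_def add.commute)
    thus ?thesis using LIMSEQ_offset convergent_def by blast
  qed
  thus ?thesis using S.subseq_diagseq by blast
qed

lemma bounded_seq_weakly_convergent_subseq:
  fixes x :: "nat \<Rightarrow> 'a::{real_inner,complete_space}"
  assumes M: "\<And>n. norm (x n) \<le> M"
  shows "\<exists>r q. strict_mono r \<and> (\<forall>y. (\<lambda>n. inner (x (r n)) y) \<longlonglongrightarrow> inner q y)"
proof -
  obtain r where r: "strict_mono r" and conv_x: "\<And>m. convergent (\<lambda>n. inner (x (r n)) (x m))"
    using diagonal_subseq_inner_convergent[of x M, OF M] by blast
  define C where "C = {y. convergent (\<lambda>n. inner (x (r n)) y)}"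
  have clC: "closed C" "subspace C"
    using closed_inner_convergent[of "\<lambda>n. x (r n)" M] subspace_inner_convergent[of "\<lambda>n. x (r n)"] M
    unfolding C_def by auto
  \<comment> \<open>\<open>C\<close> contains every \<open>x m\<close>, so the component of \<open>y\<close> orthogonal to \<open>C\<close> lies in \<open>C\<close> as well.\<close>
  have "y \<in> C" for y
  proof -
    obtain p where pC: "p \<in> C" and orth: "\<And>c. c \<in> C \<Longrightarrow> inner (y - p) c = 0"
      using orthogonal_projection_exists[OF clC] by blast
    have "inner (x (r n)) (y - p) = 0" for n
      using orth[of "x (r n)"] conv_x by (simp add: C_def inner_commute)
    hence "y - p \<in> C" by (simp add: C_def convergent_const)
    hence "y = p" using orth[of "y - p"] by simp
    thus ?thesis using pC by simp
  qed
  then obtain q where "\<forall>y. (\<lambda>n. inner (x (r n)) y) \<longlonglongrightarrow> inner q y"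
    using weak_limit_exists[of "x \<circ> r" M] M by (auto simp: C_def)
  thus ?thesis using r by blast
qed

lemma has_vector_derivative_at_if_within_atLeast:
  fixes g :: "real \<Rightarrow> 'a::real_normed_vector"
  assumes "(g has_vector_derivative g') (at t within {t0..})" "t0 < t"
  shows "(g has_vector_derivative g') (at t)"
proof -
  have "(g has_vector_derivative g') (at t within {t0<..})"
    by (rule has_vector_derivative_within_subset[OF assms(1)]) auto
  thus ?thesis using at_within_open[of t "{t0<..}"] assms(2) by simp
qed

lemma has_real_derivative_gradient_comp:
  fixes f :: "'a::real_inner \<Rightarrow> real"
  assumes grad: "\<And>x. (f has_derivative (\<lambda>h. inner (gradf x) h)) (at x)"
    and dv: "(v has_vector_derivative v') (at t within s)"
  shows "((\<lambda>s. f (v s)) has_real_derivative inner (gradf (v t)) v') (at t within s)"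
proof -
  have "((\<lambda>s. f (v s)) has_derivative (\<lambda>h. inner (gradf (v t)) (h *\<^sub>R v'))) (at t within s)"
    using has_derivative_compose[OF dv[unfolded has_vector_derivative_def] grad[of "v t"]] .
  thus ?thesis unfolding has_field_derivative_def
    by (rule has_derivative_eq_rhs) (auto simp: fun_eq_iff mult.commute)
qed

lemma has_real_derivative_inner:
  fixes a b :: "real \<Rightarrow> 'a::real_inner"
  assumes "(a has_vector_derivative a') (at t within s)" "(b has_vector_derivative b') (at t within s)"
  shows "((\<lambda>s. inner (a s) (b s)) has_real_derivative inner a' (b t) + inner (a t) b') (at t within s)"
proof -
  have "((\<lambda>s. inner (a s) (b s)) has_derivative
      (\<lambda>h. inner (a t) (h *\<^sub>R b') + inner (h *\<^sub>R a') (b t))) (at t within s)"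
    using has_derivative_inner[OF assms[unfolded has_vector_derivative_def]] .
  thus ?thesis unfolding has_field_derivative_def
    by (rule has_derivative_eq_rhs) (auto simp: fun_eq_iff algebra_simps)
qed

lemma has_real_derivative_norm_squared:
  fixes w :: "real \<Rightarrow> 'a::real_inner"
  assumes "(w has_vector_derivative w') (at t within s)"
  shows "((\<lambda>s. (norm (w s))\<^sup>2) has_real_derivative 2 * inner (w t) w') (at t within s)"
  using has_real_derivative_inner[OF assms assms]
  by (simp add: power2_norm_eq_inner inner_commute)

lemma convex_gradient_inequality:
  fixes f :: "'a::real_inner \<Rightarrow> real"
  assumes convex: "convex_on UNIV f"
    and grad: "\<And>x. (f has_derivative (\<lambda>h. inner (gradf x) h)) (at x)"
  shows "f x + inner (gradf x) (y - x) \<le> f y"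
proof -
  define g where "g s = f (x + s *\<^sub>R (y - x))" for s :: real
  have "convex_on UNIV g"
  proof (rule convex_onI)
    fix t s1 s2 :: real assume t: "t > 0" "t < 1"
    have "x + ((1 - t) * s1 + t * s2) *\<^sub>R (y - x)
        = (1 - t) *\<^sub>R (x + s1 *\<^sub>R (y - x)) + t *\<^sub>R (x + s2 *\<^sub>R (y - x))"
      by (simp add: algebra_simps)
    thus "g ((1 - t) *\<^sub>R s1 + t *\<^sub>R s2) \<le> (1 - t) * g s1 + t * g s2"
      unfolding g_def using t by (simp add: convex_onD[OF convex])
  qed simp
  have dl: "((\<lambda>s. x + s *\<^sub>R (y - x)) has_vector_derivative (y - x)) (at 0)"
    by (auto intro!: derivative_eq_intros)
  have "(g has_real_derivative inner (gradf x) (y - x)) (at 0 within UNIV)"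
    using has_real_derivative_gradient_comp[OF grad dl] by (simp add: g_def[abs_def])
  hence "inner (gradf x) (y - x) * (1 - 0) \<le> g 1 - g 0"
    by (intro convex_on_imp_above_tangent[OF \<open>convex_on UNIV g\<close>]) auto
  thus ?thesis by (simp add: g_def)
qed

lemma argmin_set_eq_Inf:
  assumes "z \<in> argmin_set f"
  shows "f z = Inf (range f)"
  using assms by (intro cInf_eq_minimum[symmetric]) (auto simp: argmin_set_def)

lemma Inf_range_le_if_argmin_set_nonempty:
  assumes "argmin_set f \<noteq> {}"
  shows "Inf (range f) \<le> f x"
proof -
  obtain z where z: "z \<in> argmin_set f" using assms by blast
  hence "f z \<le> f x" by (simp add: argmin_set_def)
  thus ?thesis using argmin_set_eq_Inf[OF z] by simp
qed

lemma increment_le_powr_if_derivative_le: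
  fixes k D :: "real \<Rightarrow> real"
  assumes a: "a > 0" and T: "T > 0" and t: "T \<le> t"
    and dk: "\<And>s. T \<le> s \<Longrightarrow> (k has_real_derivative s powr (a - 1) * D s) (at s)"
    and D: "\<And>s. T \<le> s \<Longrightarrow> D s \<le> \<eta>"
  shows "k t - k T \<le> \<eta> / a * (t powr a - T powr a)"
proof -
  have "(\<lambda>s. k s - \<eta> / a * s powr a) t \<le> (\<lambda>s. k s - \<eta> / a * s powr a) T"
  proof (rule DERIV_nonpos_imp_nonincreasing[OF t])
    fix s assume s: "T \<le> s" "s \<le> t"
    have "((\<lambda>s. k s - \<eta> / a * s powr a) has_real_derivative
        s powr (a - 1) * D s - \<eta> / a * (a * s powr (a - 1))) (at s)"
      using s T by (intro DERIV_diff DERIV_cmult dk has_real_derivative_powr) auto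
    moreover have "s powr (a - 1) * D s \<le> s powr (a - 1) * \<eta>"
      using D s by (intro mult_left_mono) auto
    ultimately show "\<exists>y. ((\<lambda>s. k s - \<eta> / a * s powr a) has_real_derivative y) (at s) \<and> y \<le> 0"
      using a by (auto simp: mult.commute)
  qed
  thus ?thesis by (simp add: algebra_simps)
qed

lemma euler_deviation_bound:
  fixes q q' :: "real \<Rightarrow> real"
  assumes a: "a > 0" and T: "T > 0" and t: "T \<le> t"
    and dq: "\<And>s. T \<le> s \<Longrightarrow> (q has_real_derivative q' s) (at s)"
    and close: "\<And>s. T \<le> s \<Longrightarrow> \<bar>s * q' s + a * q s - L\<bar> \<le> \<eta>"
  shows "t powr a * \<bar>q t - L / a\<bar> \<le> T powr a * \<bar>q T - L / a\<bar> + \<eta> / a * t powr a"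
proof -
  define k where "k s = s powr a * (q s - L / a)" for s
  have dk: "(k has_real_derivative s powr (a - 1) * (s * q' s + a * q s - L)) (at s)"
    if "T \<le> s" for s
  proof -
    have s: "s > 0" using that T by simp
    have "(k has_real_derivative (a * s powr (a - 1)) * (q s - L / a) + s powr a * q' s) (at s)"
      unfolding k_def[abs_def] using that T
      DERIV_mult'[OF has_real_derivative_powr[OF s, of a] DERIV_diff[OF dq[of s] DERIV_const[of "L / a"]]]
      by (auto simp: algebra_simps)
    moreover have "s powr a = s powr (a - 1) * s" using s by (simp add: powr_diff)
    hence "(a * s powr (a - 1)) * (q s - L / a) + s powr a * q' s
        = s powr (a - 1) * (s * q' s + a * q s - L)"
      using a by (simp add: field_simps)
    ultimately show ?thesis by simp
  qed
  have dk': "((\<lambda>s. - k s) has_real_derivative s powr (a - 1) * - (s * q' s + a * q s - L)) (at s)"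
    if "T \<le> s" for s
    using DERIV_minus[OF dk[OF that]] by (simp add: algebra_simps)
  have "s * q' s + a * q s - L \<le> \<eta>" "- (s * q' s + a * q s - L) \<le> \<eta>" if "T \<le> s" for s
    using close[OF that] by auto
  hence "k t - k T \<le> \<eta> / a * (t powr a - T powr a)" "- k t - - k T \<le> \<eta> / a * (t powr a - T powr a)"
    using increment_le_powr_if_derivative_le[OF a T t, of k "\<lambda>s. s * q' s + a * q s - L"]
      increment_le_powr_if_derivative_le[OF a T t, of "\<lambda>s. - k s" "\<lambda>s. - (s * q' s + a * q s - L)"]
      dk dk' by auto
  moreover have "\<eta> / a * T powr a \<ge> 0" using close[of T] a by simp
  ultimately have "\<bar>k t\<bar> \<le> \<bar>k T\<bar> + \<eta> / a * t powr a"
    using abs_ge_self[of "k T"] abs_ge_minus_self[of "k T"]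
    by (simp add: abs_le_iff right_diff_distrib)
  thus ?thesis by (simp add: k_def abs_mult)
qed

lemma tendsto_of_euler_tendsto:
  fixes q q' :: "real \<Rightarrow> real"
  assumes a: "a > 0" and T0: "T0 > 0"
    and dq: "\<And>t. t \<ge> T0 \<Longrightarrow> (q has_real_derivative q' t) (at t)"
    and lim: "((\<lambda>t. t * q' t + a * q t) \<longlongrightarrow> L) at_top"
  shows "(q \<longlongrightarrow> L / a) at_top"
proof (rule tendstoI)
  fix e :: real assume e: "e > 0"
  have "eventually (\<lambda>t. dist (t * q' t + a * q t) L < e * a / 2) at_top"
    using a e by (intro tendstoD[OF lim]) simp
  then obtain T1 where T1: "\<And>t. t \<ge> T1 \<Longrightarrow> \<bar>t * q' t + a * q t - L\<bar> < e * a / 2"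
    by (auto simp: eventually_at_top_linorder dist_real_def)
  define T where "T = max T1 T0"
  have T: "T \<ge> T1" "T \<ge> T0" "T > 0" using T0 by (auto simp: T_def)
  have bound: "\<bar>q t - L / a\<bar> \<le> T powr a * \<bar>q T - L / a\<bar> * t powr (- a) + e / 2" if "t \<ge> T" for t
  proof -
    have close: "\<bar>s * q' s + a * q s - L\<bar> \<le> e * a / 2" if "T \<le> s" for s
      using T1[of s] that T by simp
    have "t powr a * \<bar>q t - L / a\<bar> \<le> T powr a * \<bar>q T - L / a\<bar> + (e * a / 2) / a * t powr a"
      by (rule euler_deviation_bound[OF a T(3) that, of q q' L]) (use dq T close in auto)
    hence "t powr a * \<bar>q t - L / a\<bar> * t powr (- a)
        \<le> (T powr a * \<bar>q T - L / a\<bar> + (e * a / 2) / a * t powr a) * t powr (- a)"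
      by (intro mult_right_mono) auto
    thus ?thesis using that T a by (simp add: powr_minus field_simps)
  qed
  have "((\<lambda>t. T powr a * \<bar>q T - L / a\<bar> * t powr (- a)) \<longlongrightarrow> T powr a * \<bar>q T - L / a\<bar> * 0) at_top"
    by (intro tendsto_mult tendsto_const tendsto_neg_powr filterlim_ident) (use a in auto)
  hence "eventually (\<lambda>t. T powr a * \<bar>q T - L / a\<bar> * t powr (- a) < e / 2) at_top"
    using e by (intro order_tendstoD(2)) auto
  with eventually_ge_at_top[of T]
  show "eventually (\<lambda>t. dist (q t) (L / a) < e) at_top"
    by eventually_elim (use bound in \<open>force simp: dist_real_def\<close>)
qed

lemma antimono_nonneg_convergent_at_top:
  fixes g :: "real \<Rightarrow> real"
  assumes mono: "\<And>s t. T \<le> s \<Longrightarrow> s \<le> t \<Longrightarrow> g t \<le> g s"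
    and nonneg: "\<And>t. T \<le> t \<Longrightarrow> 0 \<le> g t"
  shows "\<exists>L. (g \<longlongrightarrow> L) at_top"
proof -
  define L where "L = Inf (g ` {T..})"
  have ne: "g ` {T..} \<noteq> {}" by auto
  have Lle: "L \<le> g t" if "t \<ge> T" for t
    unfolding L_def using that nonneg by (auto intro!: cInf_lower bdd_belowI[of _ 0])
  have "(g \<longlongrightarrow> L) at_top"
  proof (rule tendstoI)
    fix e :: real assume e: "e > 0"
    have "Inf (g ` {T..}) < L + e" using e by (simp add: L_def)
    then obtain t1 where t1: "t1 \<ge> T" "g t1 < L + e" using cInf_lessD[OF ne] by auto
    show "eventually (\<lambda>t. dist (g t) L < e) at_top"
      unfolding eventually_at_top_linorder
    proof (intro exI[of _ t1] allI impI)
      fix t assume "t \<ge> t1"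
      hence "g t \<le> g t1" "L \<le> g t" using mono[of t1 t] t1 Lle[of t] by auto
      thus "dist (g t) L < e" using t1 by (simp add: dist_real_def)
    qed
  qed
  thus ?thesis by blast
qed

text \<open>If \<open>A \<rightarrow> l > 0\<close>, the bound \<open>G' \<le> -cA/t\<close> would drive \<open>G\<close> below \<open>G(T) - (cl/2) ln(t/T)\<close>, hence below \<open>0\<close>.\<close>

lemma tendsto_nonpos_if_dissipation:
  fixes A G :: "real \<Rightarrow> real"
  assumes A: "(A \<longlongrightarrow> l) at_top"
    and T: "T > 0" and c: "c > 0"
    and G: "\<And>t. t \<ge> T \<Longrightarrow> G t \<ge> 0"
    and dG: "\<And>t. t \<ge> T \<Longrightarrow> \<exists>D. (G has_real_derivative D) (at t) \<and> D \<le> - c * A t / t"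
  shows "l \<le> 0"
proof (rule ccontr)
  assume "\<not> l \<le> 0"
  hence l: "l > 0" by simp
  from order_tendstoD(1)[OF A, of "l / 2"] l
  obtain T0 where T0: "\<And>t. t \<ge> T0 \<Longrightarrow> A t > l / 2" by (auto simp: eventually_at_top_linorder)
  define T1 where "T1 = max T T0"
  have T1: "T1 \<ge> T" "T1 \<ge> T0" "T1 > 0" using T by (auto simp: T1_def)
  define K where "K = c * l / 2"
  have K: "K > 0" using c l by (simp add: K_def)
  have dec: "G t + K * ln t \<le> G T1 + K * ln T1" if "t \<ge> T1" for t
  proof -
    have "(\<lambda>s. G s + K * ln s) t \<le> (\<lambda>s. G s + K * ln s) T1"
    proof (rule DERIV_nonpos_imp_nonincreasing[OF that])
      fix s assume s: "T1 \<le> s" "s \<le> t"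
      hence "T \<le> s" using T1 by simp
      then obtain D where D: "(G has_real_derivative D) (at s)" "D \<le> - c * A s / s"
        using dG by blast
      have sp: "s > 0" using s T1 by simp
      have "((\<lambda>s. G s + K * ln s) has_real_derivative D + K * (1 / s)) (at s)"
        using sp by (auto intro!: derivative_eq_intros D(1))
      moreover have "c * (l / 2) / s \<le> c * A s / s"
        using T0[of s] s T1 c sp by (intro divide_right_mono mult_left_mono) auto
      hence "D + K * (1 / s) \<le> 0" using D(2) by (simp add: K_def)
      ultimately show "\<exists>y. ((\<lambda>s. G s + K * ln s) has_real_derivative y) (at s) \<and> y \<le> 0" by blast
    qed
    thus ?thesis by simp
  qed
  define t where "t = exp ((G T1 + K * ln T1) / K + 1)"
  have lt: "ln t = (G T1 + K * ln T1) / K + 1" by (simp add: t_def)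
  have "ln T1 \<le> (G T1 + K * ln T1) / K" using G[of T1] T1 K by (simp add: field_simps)
  hence "ln T1 \<le> ln t" using lt by simp
  moreover have "t > 0" by (simp add: t_def)
  ultimately have tT: "t \<ge> T1" using T1(3) ln_le_cancel_iff by blast
  have "K * ln t = G T1 + K * ln T1 + K" using K lt by (simp add: field_simps)
  hence "G t < 0" using dec[OF tT] K by simp
  thus False using G[of t] tT T1 by simp
qed

lemma averaged_bound_integrated:
  fixes \<phi> \<phi>' :: "real \<Rightarrow> real"
  assumes T: "T > 0" and t: "T \<le> t"
    and d\<phi>: "\<And>t. T \<le> t \<Longrightarrow> (\<phi> has_real_derivative \<phi>' t) (at t)"
    and averaged: "\<And>t. T \<le> t \<Longrightarrow> \<phi> t + t / 4 * \<phi>' t \<le> c / t ^ 3"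
  shows "t ^ 4 * \<phi> t \<le> T ^ 4 * \<phi> T + 4 * c * (t - T)"
proof -
  have "(\<lambda>s. s ^ 4 * \<phi> s - 4 * c * s) t \<le> (\<lambda>s. s ^ 4 * \<phi> s - 4 * c * s) T"
  proof (rule DERIV_nonpos_imp_nonincreasing[OF t])
    fix s assume s: "T \<le> s" "s \<le> t"
    have sp: "s > 0" using s T by simp
    have "((\<lambda>s. s ^ 4 * \<phi> s - 4 * c * s) has_real_derivative
        4 * s ^ 3 * (\<phi> s + s / 4 * \<phi>' s) - 4 * c) (at s)"
      using s by (auto intro!: derivative_eq_intros d\<phi> simp: algebra_simps eval_nat_numeral)
    moreover have "4 * s ^ 3 * (\<phi> s + s / 4 * \<phi>' s) \<le> 4 * s ^ 3 * (c / s ^ 3)"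
      using averaged[of s] s sp by (intro mult_left_mono) auto
    ultimately show "\<exists>y. ((\<lambda>s. s ^ 4 * \<phi> s - 4 * c * s) has_real_derivative y) (at s) \<and> y \<le> 0"
      using sp by fastforce
  qed
  thus ?thesis by (simp add: algebra_simps)
qed

lemma averaged_bound_eventually:
  fixes \<phi> \<phi>' W :: "real \<Rightarrow> real"
  assumes T: "T > 0"
    and d\<phi>: "\<And>t. T \<le> t \<Longrightarrow> (\<phi> has_real_derivative \<phi>' t) (at t)"
    and averaged: "\<And>t. T \<le> t \<Longrightarrow> \<phi> t + t / 4 * \<phi>' t \<le> W t"
    and W: "eventually (\<lambda>t. norm (W t) \<le> c * norm (1 / t ^ 3)) at_top"
  obtains T1 where "T1 \<ge> T" "\<And>t. T1 \<le> t \<Longrightarrow> t ^ 4 * \<phi> t \<le> T1 ^ 4 * \<phi> T1 + 4 * c * (t - T1)"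
proof -
  from W eventually_gt_at_top[of 0] have "eventually (\<lambda>t. W t \<le> c / t ^ 3) at_top"
    by eventually_elim (auto simp: abs_le_iff)
  then obtain T0 where T0: "\<And>t. T0 \<le> t \<Longrightarrow> W t \<le> c / t ^ 3"
    by (auto simp: eventually_at_top_linorder)
  define T1 where "T1 = max T T0"
  have T1: "T \<le> T1" "T0 \<le> T1" "T1 > 0" using T by (auto simp: T1_def)
  have "\<phi> t + t / 4 * \<phi>' t \<le> c / t ^ 3" if "T1 \<le> t" for t
    using averaged[of t] T0[of t] that T1 by simp
  with T1 d\<phi> that[of T1] show thesis
    using averaged_bound_integrated[OF T1(3), of _ \<phi> \<phi>' c] by simp
qed

lemma averaged_bigo_imp_bigo:
  fixes \<phi> \<phi>' W :: "real \<Rightarrow> real"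
  assumes T: "T > 0"
    and nonneg: "\<And>t. T \<le> t \<Longrightarrow> 0 \<le> \<phi> t"
    and d\<phi>: "\<And>t. T \<le> t \<Longrightarrow> (\<phi> has_real_derivative \<phi>' t) (at t)"
    and averaged: "\<And>t. T \<le> t \<Longrightarrow> \<phi> t + t / 4 * \<phi>' t \<le> W t"
    and W: "W \<in> O[at_top](\<lambda>t. 1 / t ^ 3)"
  shows "\<phi> \<in> O[at_top](\<lambda>t. 1 / t ^ 3)"
proof -
  obtain c where c: "c > 0" and Wc: "eventually (\<lambda>t. norm (W t) \<le> c * norm (1 / t ^ 3)) at_top"
    using landau_o.bigE[OF W] by blast
  obtain T1 where T1: "T1 \<ge> T"
    and bound: "\<And>t. T1 \<le> t \<Longrightarrow> t ^ 4 * \<phi> t \<le> T1 ^ 4 * \<phi> T1 + 4 * c * (t - T1)"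
    using averaged_bound_eventually[OF T d\<phi> averaged Wc] by blast
  define K where "K = \<bar>T1 ^ 4 * \<phi> T1\<bar> + 4 * c"
  show ?thesis
  proof (rule bigoI[of _ K])
    show "eventually (\<lambda>t. norm (\<phi> t) \<le> K * norm (1 / t ^ 3)) at_top"
      using eventually_ge_at_top[of "max T1 1"]
    proof eventually_elim
      case (elim t)
      hence t: "T1 \<le> t" "1 \<le> t" by auto
      have "T1 ^ 4 * \<phi> T1 \<le> \<bar>T1 ^ 4 * \<phi> T1\<bar> * t" using t by (smt (verit) abs_ge_self mult_le_cancel_left1 abs_ge_zero)
      moreover have "4 * c * (t - T1) \<le> 4 * c * t" using c T1 T by (simp add: mult_left_mono)
      ultimately have "t ^ 4 * \<phi> t \<le> K * t" using bound[OF t(1)] by (simp add: K_def algebra_simps)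
      hence "\<phi> t \<le> K / t ^ 3" using t by (simp add: field_simps eval_nat_numeral)
      thus ?case using nonneg[of t] t T1 by simp
    qed
  qed
qed

lemma averaged_smallo_imp_smallo:
  fixes \<phi> \<phi>' W :: "real \<Rightarrow> real"
  assumes T: "T > 0"
    and nonneg: "\<And>t. T \<le> t \<Longrightarrow> 0 \<le> \<phi> t"
    and d\<phi>: "\<And>t. T \<le> t \<Longrightarrow> (\<phi> has_real_derivative \<phi>' t) (at t)"
    and averaged: "\<And>t. T \<le> t \<Longrightarrow> \<phi> t + t / 4 * \<phi>' t \<le> W t"
    and W: "W \<in> o[at_top](\<lambda>t. 1 / t ^ 3)"
  shows "\<phi> \<in> o[at_top](\<lambda>t. 1 / t ^ 3)"
proof (rule landau_o.smallI)
  fix \<epsilon> :: real assume \<epsilon>: "\<epsilon> > 0"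
  obtain T1 where T1: "T1 \<ge> T"
    and bound: "\<And>t. T1 \<le> t \<Longrightarrow> t ^ 4 * \<phi> t \<le> T1 ^ 4 * \<phi> T1 + 4 * (\<epsilon> / 8) * (t - T1)"
    using averaged_bound_eventually[OF T d\<phi> averaged landau_o.smallD[OF W, of "\<epsilon> / 8"]] \<epsilon> by auto
  define K where "K = \<bar>T1 ^ 4 * \<phi> T1\<bar>"
  show "eventually (\<lambda>t. norm (\<phi> t) \<le> \<epsilon> * norm (1 / t ^ 3)) at_top"
    using eventually_ge_at_top[of "max T1 (2 * K / \<epsilon>)"]
  proof eventually_elim
    case (elim t)
    hence t: "T1 \<le> t" "2 * K / \<epsilon> \<le> t" by auto
    have tp: "t > 0" using t T1 T by simp
    have "K \<le> \<epsilon> / 2 * t" using t(2) \<epsilon> by (simp add: field_simps)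
    moreover have "4 * (\<epsilon> / 8) * (t - T1) \<le> \<epsilon> / 2 * t" using \<epsilon> T1 T by (simp add: field_simps)
    moreover have "T1 ^ 4 * \<phi> T1 \<le> K" by (simp add: K_def)
    ultimately have "t ^ 4 * \<phi> t \<le> \<epsilon> * t" using bound[OF t(1)] by linarith
    hence "\<phi> t \<le> \<epsilon> / t ^ 3" using tp by (simp add: field_simps eval_nat_numeral)
    thus ?case using nonneg[of t] t T1 tp by simp
  qed
qed

section \<open>Opial's lemma\<close>

lemma convex_weakly_lower_semicontinuous:
  fixes f :: "'a::real_inner \<Rightarrow> real"
  assumes convex: "convex_on UNIV f"
    and grad: "\<And>x. (f has_derivative (\<lambda>h. inner (gradf x) h)) (at x)"
    and fx: "(\<lambda>n. f (x n)) \<longlonglongrightarrow> L"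
    and weak: "\<And>y. (\<lambda>n. inner (x n) y) \<longlonglongrightarrow> inner q y"
  shows "f q \<le> L"
proof -
  have lim: "(\<lambda>n. f (x n) - (inner (x n) (gradf q) - inner q (gradf q))) \<longlonglongrightarrow> L"
    using tendsto_diff[OF fx tendsto_diff[OF weak[of "gradf q"] tendsto_const[of "inner q (gradf q)"]]]
    by simp
  have "f q \<le> f (x n) - (inner (x n) (gradf q) - inner q (gradf q))" for n
    using convex_gradient_inequality[OF convex grad, of q "x n"]
    by (simp add: inner_diff_right inner_commute)
  thus ?thesis using LIMSEQ_le_const[OF lim] by blast
qed

lemma weakly_convergent_subseq_at_top:
  fixes v :: "real \<Rightarrow> 'a::{real_inner,complete_space}"
  assumes bounded: "eventually (\<lambda>t. norm (v t) \<le> B) at_top"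
    and s: "filterlim s at_top sequentially"
  shows "\<exists>r q. strict_mono r \<and> (\<forall>y. (\<lambda>n. inner (v (s (r n))) y) \<longlonglongrightarrow> inner q y)"
proof -
  have "eventually (\<lambda>n. norm (v (s n)) \<le> B) sequentially"
    by (rule eventually_compose_filterlim[OF bounded s])
  then obtain N where N: "\<And>n. n \<ge> N \<Longrightarrow> norm (v (s n)) \<le> B" by (auto simp: eventually_sequentially)
  obtain r q where "strict_mono r" "\<forall>y. (\<lambda>n. inner (v (s (r n + N))) y) \<longlonglongrightarrow> inner q y"
    using bounded_seq_weakly_convergent_subseq[of "\<lambda>n. v (s (n + N))" B] N by auto
  thus ?thesis by (intro exI[of _ "\<lambda>n. r n + N"] exI[of _ q]) (auto simp: strict_mono_def)
qed

lemma opial_cluster_points_unique: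
  fixes v :: "real \<Rightarrow> 'a::real_inner"
  assumes "\<exists>l. ((\<lambda>t. norm (v t - q1)) \<longlongrightarrow> l) at_top" "\<exists>l. ((\<lambda>t. norm (v t - q2)) \<longlongrightarrow> l) at_top"
    and s1: "filterlim s1 at_top sequentially" and s2: "filterlim s2 at_top sequentially"
    and w1: "\<And>y. (\<lambda>n. inner (v (s1 n)) y) \<longlonglongrightarrow> inner q1 y"
    and w2: "\<And>y. (\<lambda>n. inner (v (s2 n)) y) \<longlonglongrightarrow> inner q2 y"
  shows "q1 = q2"
proof -
  obtain l1 l2 where l1: "((\<lambda>t. norm (v t - q1)) \<longlongrightarrow> l1) at_top"
    and l2: "((\<lambda>t. norm (v t - q2)) \<longlongrightarrow> l2) at_top"
    using assms(1,2) by blast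
  define H where "H = (l1\<^sup>2 - l2\<^sup>2 - inner q1 q1 + inner q2 q2) / 2"
  have "((\<lambda>t. ((norm (v t - q1))\<^sup>2 - (norm (v t - q2))\<^sup>2 - inner q1 q1 + inner q2 q2) / 2)
      \<longlongrightarrow> H) at_top"
    unfolding H_def using l1 l2 by (intro tendsto_intros) auto
  moreover have "((norm (v t - q1))\<^sup>2 - (norm (v t - q2))\<^sup>2 - inner q1 q1 + inner q2 q2) / 2
      = inner (v t) (q2 - q1)" for t
    by (simp add: power2_norm_eq_inner inner_diff_left inner_diff_right inner_commute field_simps)
  ultimately have H: "((\<lambda>t. inner (v t) (q2 - q1)) \<longlongrightarrow> H) at_top" by simp
  have "inner q1 (q2 - q1) = H" "inner q2 (q2 - q1) = H"
    using LIMSEQ_unique[OF w1 filterlim_compose[OF H s1]]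
      LIMSEQ_unique[OF w2 filterlim_compose[OF H s2]] by simp_all
  hence "inner (q2 - q1) (q2 - q1) = 0" by (simp add: inner_diff_left)
  thus ?thesis by simp
qed

lemma tendsto_at_top_if_subseq_tendsto:
  fixes g :: "real \<Rightarrow> 'b::metric_space"
  assumes sub: "\<And>s. filterlim s at_top sequentially \<Longrightarrow>
    \<exists>r. strict_mono r \<and> (\<lambda>n. g (s (r n))) \<longlonglongrightarrow> c"
  shows "(g \<longlongrightarrow> c) at_top"
proof (rule ccontr)
  assume "\<not> ?thesis"
  then obtain e where e: "e > 0" and "\<not> eventually (\<lambda>t. dist (g t) c < e) at_top"
    unfolding tendsto_iff by blast
  hence "\<forall>n. \<exists>t. t \<ge> real n \<and> dist (g t) c \<ge> e"
    unfolding eventually_at_top_linorder by (auto simp: not_less)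
  hence "\<exists>s. \<forall>n. s n \<ge> real n \<and> dist (g (s n)) c \<ge> e" by (rule choice)
  then obtain s where s: "\<And>n. s n \<ge> real n" and far: "\<And>n. dist (g (s n)) c \<ge> e" by blast
  have "filterlim s at_top sequentially"
    by (rule filterlim_at_top_mono[OF filterlim_real_sequentially]) (use s in auto)
  then obtain r where "(\<lambda>n. g (s (r n))) \<longlonglongrightarrow> c" using sub by blast
  from tendstoD[OF this e] obtain n where "dist (g (s (r n))) c < e"
    by (auto simp: eventually_sequentially)
  thus False using far[of "r n"] by simp
qed

lemma opial_weak_convergence:
  fixes v :: "real \<Rightarrow> 'a::{real_inner,complete_space}"
  assumes z0: "z0 \<in> S"
    and dist_conv: "\<And>z. z \<in> S \<Longrightarrow> \<exists>l. ((\<lambda>t. norm (v t - z)) \<longlongrightarrow> l) at_top"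
    and cluster: "\<And>s q. filterlim s at_top sequentially \<Longrightarrow>
      (\<And>y. (\<lambda>n. inner (v (s n)) y) \<longlonglongrightarrow> inner q y) \<Longrightarrow> q \<in> S"
  shows "\<exists>q\<in>S. \<forall>y. ((\<lambda>t. inner (v t) y) \<longlongrightarrow> inner q y) at_top"
proof -
  obtain l0 where l0: "((\<lambda>t. norm (v t - z0)) \<longlongrightarrow> l0) at_top" using dist_conv[OF z0] by blast
  have "eventually (\<lambda>t. norm (v t - z0) < l0 + 1) at_top" using order_tendstoD(2)[OF l0] by simp
  hence bounded: "eventually (\<lambda>t. norm (v t) \<le> norm z0 + (l0 + 1)) at_top"
  proof eventually_elim
    case (elim t) thus ?case using norm_triangle_sub[of "v t" z0] by linarith
  qed
  have cluster_point: "\<exists>r q. strict_mono r \<and> q \<in> S \<and> filterlim (\<lambda>n. s (r n)) at_top sequentially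
      \<and> (\<forall>y. (\<lambda>n. inner (v (s (r n))) y) \<longlonglongrightarrow> inner q y)"
    if s: "filterlim s at_top sequentially" for s
  proof -
    obtain r q where r: "strict_mono r" and w: "\<forall>y. (\<lambda>n. inner (v (s (r n))) y) \<longlonglongrightarrow> inner q y"
      using weakly_convergent_subseq_at_top[OF bounded s] by blast
    have "filterlim (\<lambda>n. s (r n)) at_top sequentially"
      by (rule filterlim_compose[OF s filterlim_subseq[OF r]])
    thus ?thesis using r w cluster by blast
  qed
  obtain r0 q where qS: "q \<in> S" and sr0: "filterlim (\<lambda>n. real (r0 n)) at_top sequentially"
    and wq: "\<And>y. (\<lambda>n. inner (v (real (r0 n))) y) \<longlonglongrightarrow> inner q y"
    using cluster_point[OF filterlim_real_sequentially] by blast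
  have "((\<lambda>t. inner (v t) y) \<longlongrightarrow> inner q y) at_top" for y
  proof (rule tendsto_at_top_if_subseq_tendsto)
    fix s :: "nat \<Rightarrow> real" assume "filterlim s at_top sequentially"
    then obtain r q' where "strict_mono r" "q' \<in> S" and sr: "filterlim (\<lambda>n. s (r n)) at_top sequentially"
      and wq': "\<And>y. (\<lambda>n. inner (v (s (r n))) y) \<longlonglongrightarrow> inner q' y"
      using cluster_point by blast
    moreover have "q' = q"
      by (rule opial_cluster_points_unique[OF dist_conv[OF \<open>q' \<in> S\<close>] dist_conv[OF qS] sr sr0 wq' wq])
    ultimately show "\<exists>r. strict_mono r \<and> (\<lambda>n. inner (v (s (r n))) y) \<longlonglongrightarrow> inner q y" by blast
  qed
  thus ?thesis using qS by blast
qed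

section \<open>The rescaled second-order system\<close>

locale rescaled_gradient_system =
  fixes f :: "'a::{real_inner,complete_space} \<Rightarrow> real" and gradf :: "'a \<Rightarrow> 'a"
    and v v1 v2 :: "real \<Rightarrow> 'a" and t0 \<alpha> :: real
  assumes convex: "convex_on UNIV f"
    and grad: "\<And>x. (f has_derivative (\<lambda>h. inner (gradf x) h)) (at x)"
    and argmin_ne: "argmin_set f \<noteq> {}"
    and t0_pos: "t0 > 0"
    and dv: "\<And>t. t > t0 \<Longrightarrow> (v has_vector_derivative v1 t) (at t)"
    and dv1: "\<And>t. t > t0 \<Longrightarrow> (v1 has_vector_derivative v2 t) (at t)"
    and ode: "\<And>t. t > t0 \<Longrightarrow> t *\<^sub>R v2 t + (\<alpha> + 1) *\<^sub>R v1 t + (t\<^sup>2 / 4) *\<^sub>R gradf (v t) = 0"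
begin

definition gap :: "real \<Rightarrow> real" where
  "gap t = f (v t) - Inf (range f)"

lemma gap_nonneg: "0 \<le> gap t"
  using Inf_range_le_if_argmin_set_nonempty[OF argmin_ne] by (simp add: gap_def)

lemma gap_le_inner_gradient:
  assumes "z \<in> argmin_set f"
  shows "gap t \<le> inner (gradf (v t)) (v t - z)"
  using convex_gradient_inequality[OF convex grad, of "v t" z] argmin_set_eq_Inf[OF assms]
  by (simp add: gap_def inner_diff_right)

lemma has_real_derivative_gap:
  assumes "t > t0"
  shows "(gap has_real_derivative inner (gradf (v t)) (v1 t)) (at t)"
  unfolding gap_def[abs_def]
  using DERIV_diff[OF has_real_derivative_gradient_comp[OF grad dv[OF assms]] DERIV_const] by simp

definition energy :: "real \<Rightarrow> 'a \<Rightarrow> real \<Rightarrow> real" where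
  "energy lam z t = t ^ 3 / 4 * gap t + (norm (lam *\<^sub>R (v t - z) + t *\<^sub>R v1 t))\<^sup>2 / 2
    + lam * (\<alpha> - lam) / 2 * (norm (v t - z))\<^sup>2"

lemma energy_has_real_derivative:
  assumes t: "t > t0"
  shows "(energy lam z has_real_derivative 3 * t\<^sup>2 / 4 * gap t + (lam - \<alpha>) * t * (norm (v1 t))\<^sup>2
    - lam * t\<^sup>2 / 4 * inner (gradf (v t)) (v t - z)) (at t)"
proof -
  let ?g = "gradf (v t)"
  have dw: "((\<lambda>s. v s - z) has_vector_derivative v1 t) (at t)"
    using has_vector_derivative_diff[OF dv[OF t] has_vector_derivative_const[of z]] by simp
  have "((\<lambda>s. lam *\<^sub>R (v s - z) + s *\<^sub>R v1 s) has_vector_derivative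
      lam *\<^sub>R v1 t + (v1 t + t *\<^sub>R v2 t)) (at t)"
    using has_vector_derivative_add[OF has_vector_derivative_scaleR[OF DERIV_const[of lam] dw]
        has_vector_derivative_scaleR[OF DERIV_ident dv1[OF t]]]
    by (simp add: add.commute)
  also have "lam *\<^sub>R v1 t + (v1 t + t *\<^sub>R v2 t) = (lam - \<alpha>) *\<^sub>R v1 t - (t\<^sup>2 / 4) *\<^sub>R ?g"
  proof -
    have "t *\<^sub>R v2 t = - ((\<alpha> + 1) *\<^sub>R v1 t) - (t\<^sup>2 / 4) *\<^sub>R ?g"
      using ode[OF t] by (simp add: eq_neg_iff_add_eq_0 algebra_simps)
    thus ?thesis by (simp add: scaleR_add_left scaleR_diff_left algebra_simps)
  qed
  finally have dP: "((\<lambda>s. lam *\<^sub>R (v s - z) + s *\<^sub>R v1 s) has_vector_derivative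
      (lam - \<alpha>) *\<^sub>R v1 t - (t\<^sup>2 / 4) *\<^sub>R ?g) (at t)" .
  have dgap: "((\<lambda>s. s ^ 3 / 4 * gap s) has_real_derivative
      3 * t\<^sup>2 / 4 * gap t + t ^ 3 / 4 * inner ?g (v1 t)) (at t)"
  proof -
    have "((\<lambda>s. s ^ 3 / 4) has_real_derivative 3 * t\<^sup>2 / 4) (at t)"
      by (auto intro!: derivative_eq_intros simp: power2_eq_square)
    from DERIV_mult'[OF this has_real_derivative_gap[OF t]] show ?thesis
      by (rule DERIV_cong) (simp add: algebra_simps)
  qed
  have "(energy lam z has_real_derivative 3 * t\<^sup>2 / 4 * gap t + t ^ 3 / 4 * inner ?g (v1 t)
      + inner (lam *\<^sub>R (v t - z) + t *\<^sub>R v1 t) ((lam - \<alpha>) *\<^sub>R v1 t - (t\<^sup>2 / 4) *\<^sub>R ?g)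
      + lam * (\<alpha> - lam) * inner (v t - z) (v1 t)) (at t)"
    unfolding energy_def[abs_def]
    by (rule DERIV_cong[OF DERIV_add[OF DERIV_add[OF dgap
          DERIV_cdivide[OF has_real_derivative_norm_squared[OF dP], of 2]]
          DERIV_cmult[OF has_real_derivative_norm_squared[OF dw], of "lam * (\<alpha> - lam) / 2"]]])
      (simp add: inner_commute)
  thus ?thesis unfolding power2_norm_eq_inner
    by (rule DERIV_cong) (simp add: inner_diff_left inner_diff_right
        inner_add_left inner_add_right inner_commute algebra_simps power2_eq_square power3_eq_cube)
qed

lemma energy_derivative_le:
  assumes t: "t > t0" and z: "z \<in> argmin_set f" and lam: "0 \<le> lam"
  obtains D where "(energy lam z has_real_derivative D) (at t)"
    "D \<le> (3 - lam) * t\<^sup>2 / 4 * gap t + (lam - \<alpha>) * t * (norm (v1 t))\<^sup>2"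
proof
  show "(energy lam z has_real_derivative 3 * t\<^sup>2 / 4 * gap t + (lam - \<alpha>) * t * (norm (v1 t))\<^sup>2
    - lam * t\<^sup>2 / 4 * inner (gradf (v t)) (v t - z)) (at t)"
    by (rule energy_has_real_derivative[OF t])
  have "lam * t\<^sup>2 / 4 * gap t \<le> lam * t\<^sup>2 / 4 * inner (gradf (v t)) (v t - z)"
    using gap_le_inner_gradient[OF z] lam by (intro mult_left_mono) auto
  moreover have "(3 - lam) * t\<^sup>2 / 4 * gap t = 3 * t\<^sup>2 / 4 * gap t - lam * t\<^sup>2 / 4 * gap t"
    by (simp add: field_simps)
  ultimately show "3 * t\<^sup>2 / 4 * gap t + (lam - \<alpha>) * t * (norm (v1 t))\<^sup>2
      - lam * t\<^sup>2 / 4 * inner (gradf (v t)) (v t - z)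
    \<le> (3 - lam) * t\<^sup>2 / 4 * gap t + (lam - \<alpha>) * t * (norm (v1 t))\<^sup>2"
    by linarith
qed

lemma gap_le_energy:
  assumes "0 \<le> lam" "lam \<le> \<alpha>"
  shows "t ^ 3 / 4 * gap t \<le> energy lam z t"
proof -
  have "0 \<le> lam * (\<alpha> - lam) / 2 * (norm (v t - z))\<^sup>2" using assms by simp
  moreover have "0 \<le> (norm (lam *\<^sub>R (v t - z) + t *\<^sub>R v1 t))\<^sup>2 / 2" by simp
  ultimately show ?thesis unfolding energy_def by linarith
qed

lemma energy_nonneg:
  assumes "0 \<le> lam" "lam \<le> \<alpha>" "0 \<le> t"
  shows "0 \<le> energy lam z t"
proof -
  have "0 \<le> t ^ 3 / 4 * gap t" using gap_nonneg[of t] assms(3) by simp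
  thus ?thesis using gap_le_energy[OF assms(1,2), of t z] by linarith
qed

lemma energy_antimono:
  assumes "t0 < s" "s \<le> t" "z \<in> argmin_set f" "3 \<le> lam" "lam \<le> \<alpha>"
  shows "energy lam z t \<le> energy lam z s"
proof (rule DERIV_nonpos_imp_nonincreasing[OF assms(2)])
  fix x assume "s \<le> x" "x \<le> t"
  hence x: "t0 < x" "0 < x" using assms(1) t0_pos by auto
  have "0 \<le> lam" using assms by simp
  then obtain D where "(energy lam z has_real_derivative D) (at x)"
    and D: "D \<le> (3 - lam) * x\<^sup>2 / 4 * gap x + (lam - \<alpha>) * x * (norm (v1 x))\<^sup>2"
    using energy_derivative_le[OF x(1) assms(3)] by blast
  moreover have "(3 - lam) * x\<^sup>2 / 4 \<le> 0" using assms by (simp add: mult_nonpos_nonneg)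
  hence "(3 - lam) * x\<^sup>2 / 4 * gap x \<le> 0" using gap_nonneg by (rule mult_nonpos_nonneg)
  moreover have "(lam - \<alpha>) * x * (norm (v1 x))\<^sup>2 \<le> 0"
    using assms x by (intro mult_nonpos_nonneg) (auto intro: mult_nonpos_nonneg)
  ultimately show "\<exists>y. (energy lam z has_real_derivative y) (at x) \<and> y \<le> 0" by force
qed

lemma gap_le_inverse_cube:
  assumes "3 \<le> \<alpha>"
  obtains c where "eventually (\<lambda>t. gap t \<le> c / t ^ 3) at_top"
proof -
  obtain z where z: "z \<in> argmin_set f" using argmin_ne by blast
  have "gap t \<le> 4 * energy 3 z (t0 + 1) / t ^ 3" if "t \<ge> t0 + 1" for t
  proof -
    have "t ^ 3 / 4 * gap t \<le> energy 3 z (t0 + 1)"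
      using gap_le_energy[of 3 t z] energy_antimono[of "t0 + 1" t z 3] that z assms by simp
    thus ?thesis using that t0_pos by (simp add: field_simps)
  qed
  hence "eventually (\<lambda>t. gap t \<le> 4 * energy 3 z (t0 + 1) / t ^ 3) at_top"
    unfolding eventually_at_top_linorder by blast
  thus thesis by (rule that)
qed

lemma gap_bigo:
  assumes "3 \<le> \<alpha>"
  shows "gap \<in> O[at_top](\<lambda>t. 1 / t ^ 3)"
proof -
  obtain c where c: "eventually (\<lambda>t. gap t \<le> c / t ^ 3) at_top"
    using gap_le_inverse_cube[OF assms] by blast
  show ?thesis
  proof (rule bigoI[of _ c])
    show "eventually (\<lambda>t. norm (gap t) \<le> c * norm (1 / t ^ 3)) at_top"
      using c eventually_gt_at_top[of 0] by eventually_elim (simp add: gap_nonneg)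
  qed
qed

lemma gap_tendsto_zero:
  assumes "3 \<le> \<alpha>"
  shows "(gap \<longlongrightarrow> 0) at_top"
proof -
  obtain c where c: "eventually (\<lambda>t. gap t \<le> c / t ^ 3) at_top"
    using gap_le_inverse_cube[OF assms] by blast
  have "filterlim (\<lambda>t::real. t ^ 3) at_top at_top"
    by (intro filterlim_pow_at_top filterlim_ident) auto
  hence lim: "((\<lambda>t. c / t ^ 3) \<longlongrightarrow> 0) at_top"
    by (rule tendsto_divide_0[OF tendsto_const filterlim_at_top_imp_at_infinity])
  show ?thesis by (rule tendsto_sandwich[OF _ c tendsto_const lim]) (simp add: gap_nonneg)
qed

definition scaled_energy :: "real \<Rightarrow> real" where
  "scaled_energy t = t ^ 3 / 4 * gap t + t\<^sup>2 / 2 * (norm (v1 t))\<^sup>2"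

definition anchor :: "'a \<Rightarrow> real \<Rightarrow> real" where
  "anchor z t = t * inner (v t - z) (v1 t) + \<alpha> / 2 * (norm (v t - z))\<^sup>2"

lemma energy_eq: "energy lam z t = scaled_energy t + lam * anchor z t"
  unfolding energy_def scaled_energy_def anchor_def power2_norm_scaleR_add
  by (simp add: field_simps power2_eq_square)

lemma energy_convergent:
  assumes "z \<in> argmin_set f" "3 \<le> lam" "lam \<le> \<alpha>"
  shows "\<exists>L. (energy lam z \<longlongrightarrow> L) at_top"
proof (rule antimono_nonneg_convergent_at_top[where T="t0 + 1"])
  show "energy lam z t \<le> energy lam z s" if "t0 + 1 \<le> s" "s \<le> t" for s t
    using energy_antimono[of s t z lam] that assms by simp
  show "0 \<le> energy lam z t" if "t0 + 1 \<le> t" for t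
    using energy_nonneg[of lam t z] that assms t0_pos by simp
qed

lemma anchor_convergent:
  assumes "3 < \<alpha>" "z \<in> argmin_set f"
  shows "\<exists>L. (anchor z \<longlongrightarrow> L) at_top"
proof -
  define lam where "lam = (3 + \<alpha>) / 2"
  have "3 \<le> lam" "lam \<le> \<alpha>" using assms by (simp_all add: lam_def)
  then obtain L1 L2 where "(energy 3 z \<longlongrightarrow> L1) at_top" "(energy lam z \<longlongrightarrow> L2) at_top"
    using energy_convergent[OF assms(2)] by (meson order_trans order_refl)
  hence "((\<lambda>t. (energy lam z t - energy 3 z t) / (lam - 3)) \<longlongrightarrow> (L2 - L1) / (lam - 3)) at_top"
    using assms by (intro tendsto_intros) (auto simp: lam_def)
  moreover have "(\<lambda>t. (energy lam z t - energy 3 z t) / (lam - 3)) = anchor z"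
    using assms by (auto simp: fun_eq_iff energy_eq lam_def field_simps)
  ultimately show ?thesis by auto
qed

lemma scaled_energy_tendsto_zero:
  assumes "3 < \<alpha>"
  shows "(scaled_energy \<longlongrightarrow> 0) at_top"
proof -
  obtain z where z: "z \<in> argmin_set f" using argmin_ne by blast
  obtain L1 LB where "(energy 3 z \<longlongrightarrow> L1) at_top" "(anchor z \<longlongrightarrow> LB) at_top"
    using energy_convergent[OF z order_refl] anchor_convergent[OF assms z] assms by auto
  hence "((\<lambda>t. energy 3 z t - 3 * anchor z t) \<longlongrightarrow> L1 - 3 * LB) at_top"
    by (intro tendsto_intros)
  hence lim: "(scaled_energy \<longlongrightarrow> L1 - 3 * LB) at_top" by (simp add: energy_eq)
  have "eventually (\<lambda>t. 0 \<le> scaled_energy t) at_top"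
    using eventually_ge_at_top[of 0] by eventually_elim (simp add: scaled_energy_def gap_nonneg)
  hence "0 \<le> L1 - 3 * LB" by (rule tendsto_lowerbound[OF lim]) simp
  moreover have "L1 - 3 * LB \<le> 0"
  \<comment> \<open>\<open>\<lambda> = (3 + \<alpha>)/2\<close> lies strictly between \<open>3\<close> and \<open>\<alpha>\<close>, so \<open>E\<^sub>\<lambda>\<close> dissipates at least \<open>(\<alpha> - 3)/2 \<cdot> scaled_energy/t\<close>\<close>
  proof (rule tendsto_nonpos_if_dissipation[OF lim, of "t0 + 1" "(\<alpha> - 3) / 2" "energy ((3 + \<alpha>) / 2) z"])
    fix t assume t: "t0 + 1 \<le> t"
    hence tp: "t0 < t" "0 < t" using t0_pos by auto
    show "0 \<le> energy ((3 + \<alpha>) / 2) z t" using assms tp by (intro energy_nonneg) auto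
    obtain D where "(energy ((3 + \<alpha>) / 2) z has_real_derivative D) (at t)"
      and D: "D \<le> (3 - (3 + \<alpha>) / 2) * t\<^sup>2 / 4 * gap t + ((3 + \<alpha>) / 2 - \<alpha>) * t * (norm (v1 t))\<^sup>2"
      using energy_derivative_le[OF tp(1) z, of "(3 + \<alpha>) / 2"] assms by auto
    moreover have "(3 - (3 + \<alpha>) / 2) * t\<^sup>2 / 4 * gap t + ((3 + \<alpha>) / 2 - \<alpha>) * t * (norm (v1 t))\<^sup>2
        \<le> - ((\<alpha> - 3) / 2) * scaled_energy t / t"
      using assms tp gap_nonneg[of t] mult_right_mono[of 3 \<alpha> "norm (v1 t) * norm (v1 t)"]
      by (simp add: scaled_energy_def field_simps power2_eq_square power3_eq_cube)
    ultimately show "\<exists>D. (energy ((3 + \<alpha>) / 2) z has_real_derivative D) (at t) \<and>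
        D \<le> - ((\<alpha> - 3) / 2) * scaled_energy t / t"
      by force
  qed (use assms t0_pos in auto)
  ultimately show ?thesis using lim by simp
qed

lemma gap_smallo:
  assumes "3 < \<alpha>"
  shows "gap \<in> o[at_top](\<lambda>t. 1 / t ^ 3)"
proof (rule landau_o.smallI)
  fix c :: real assume c: "c > 0"
  have "eventually (\<lambda>t. scaled_energy t < c / 4) at_top"
    using order_tendstoD(2)[OF scaled_energy_tendsto_zero[OF assms], of "c / 4"] c by simp
  thus "eventually (\<lambda>t. norm (gap t) \<le> c * norm (1 / t ^ 3)) at_top"
    using eventually_gt_at_top[of 0]
  proof eventually_elim
    case (elim t)
    have "t ^ 3 / 4 * gap t \<le> scaled_energy t" by (simp add: scaled_energy_def)
    hence "t ^ 3 * gap t \<le> c" using elim by simp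
    thus ?case using elim gap_nonneg[of t] by (simp add: field_simps)
  qed
qed

lemma distance_convergent:
  assumes "3 < \<alpha>" "z \<in> argmin_set f"
  shows "\<exists>l. ((\<lambda>t. norm (v t - z)) \<longlongrightarrow> l) at_top"
proof -
  obtain L where L: "(anchor z \<longlongrightarrow> L) at_top" using anchor_convergent[OF assms] by blast
  have "((\<lambda>t. (norm (v t - z))\<^sup>2) \<longlongrightarrow> 2 * L / \<alpha>) at_top"
  proof (rule tendsto_of_euler_tendsto[of \<alpha> "t0 + 1" _ "\<lambda>t. 2 * inner (v t - z) (v1 t)"])
    show "((\<lambda>s. (norm (v s - z))\<^sup>2) has_real_derivative 2 * inner (v t - z) (v1 t)) (at t)"
      if "t \<ge> t0 + 1" for t
    proof -
      have "((\<lambda>s. v s - z) has_vector_derivative v1 t) (at t)"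
        using has_vector_derivative_diff[OF dv[of t] has_vector_derivative_const[of z]] that t0_pos by simp
      thus ?thesis by (rule has_real_derivative_norm_squared)
    qed
    show "((\<lambda>t. t * (2 * inner (v t - z) (v1 t)) + \<alpha> * (norm (v t - z))\<^sup>2) \<longlongrightarrow> 2 * L) at_top"
      using tendsto_mult_left[OF L, of 2] by (simp add: anchor_def algebra_simps)
  qed (use assms t0_pos in auto)
  hence "((\<lambda>t. sqrt ((norm (v t - z))\<^sup>2)) \<longlongrightarrow> sqrt (2 * L / \<alpha>)) at_top"
    by (rule tendsto_real_sqrt)
  thus ?thesis by auto
qed

lemma weakly_convergent:
  assumes "3 < \<alpha>"
  shows "\<exists>q\<in>argmin_set f. \<forall>y. ((\<lambda>t. inner (v t) y) \<longlongrightarrow> inner q y) at_top"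
proof -
  obtain z where z: "z \<in> argmin_set f" using argmin_ne by blast
  show ?thesis
  proof (rule opial_weak_convergence[OF z distance_convergent[OF assms]])
    fix s q assume s: "filterlim s at_top sequentially"
      and weak: "\<And>y. (\<lambda>n. inner (v (s n)) y) \<longlonglongrightarrow> inner q y"
    have "(\<lambda>n. gap (s n)) \<longlonglongrightarrow> 0"
      using filterlim_compose[OF gap_tendsto_zero s] assms by simp
    hence "(\<lambda>n. f (v (s n))) \<longlonglongrightarrow> Inf (range f)"
      using tendsto_add[OF _ tendsto_const[of "Inf (range f)"]] by (fastforce simp: gap_def)
    hence "f q \<le> Inf (range f)"
      by (rule convex_weakly_lower_semicontinuous[OF convex grad _ weak])
    thus "q \<in> argmin_set f"
      using Inf_range_le_if_argmin_set_nonempty[OF argmin_ne] by (auto simp: argmin_set_def intro: order_trans)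
  qed
qed

end

section \<open>The third-order equation\<close>

lemma tendsto_inner_if_averaged_tendsto:
  fixes u u' :: "real \<Rightarrow> 'a::real_inner"
  assumes a: "a > 0" and T: "T > 0"
    and du: "\<And>t. T \<le> t \<Longrightarrow> (u has_vector_derivative u' t) (at t)"
    and lim: "((\<lambda>t. inner (u t + (t / a) *\<^sub>R u' t) y) \<longlongrightarrow> l) at_top"
  shows "((\<lambda>t. inner (u t) y) \<longlongrightarrow> l) at_top"
proof -
  have "((\<lambda>t. inner (u t) y) \<longlongrightarrow> a * l / a) at_top"
  proof (rule tendsto_of_euler_tendsto[OF a T])
    show "((\<lambda>s. inner (u s) y) has_real_derivative inner (u' t) y) (at t)" if "T \<le> t" for t
      using has_real_derivative_inner[OF du[OF that] has_vector_derivative_const[of y]] by simp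
    have "a * inner (u t + (t / a) *\<^sub>R u' t) y = t * inner (u' t) y + a * inner (u t) y" for t
      using a by (simp add: inner_add_left algebra_simps)
    thus "((\<lambda>t. t * inner (u' t) y + a * inner (u t) y) \<longlongrightarrow> a * l) at_top"
      using tendsto_mult_left[OF lim, of a] by simp
  qed
  thus ?thesis using a by simp
qed

locale toges =
  fixes f :: "'a::{real_inner, complete_space} \<Rightarrow> real" and gradf :: "'a \<Rightarrow> 'a"
    and u u1 u2 u3 :: "real \<Rightarrow> 'a" and t0 \<alpha> :: real
  assumes convex: "convex_on UNIV f"
    and grad: "\<And>x. (f has_derivative (\<lambda>h. inner (gradf x) h)) (at x)"
    and argmin_ne: "argmin_set f \<noteq> {}"
    and t0_pos: "t0 > 0"
    and d1: "\<And>t. t \<ge> t0 \<Longrightarrow> (u has_vector_derivative u1 t) (at t within {t0..})"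
    and d2: "\<And>t. t \<ge> t0 \<Longrightarrow> (u1 has_vector_derivative u2 t) (at t within {t0..})"
    and d3: "\<And>t. t \<ge> t0 \<Longrightarrow> (u2 has_vector_derivative u3 t) (at t within {t0..})"
    and ode: "\<And>t. t \<ge> t0 \<Longrightarrow>
      u3 t + ((\<alpha> + 7) / t) *\<^sub>R u2 t + (5 * (\<alpha> + 1) / t\<^sup>2) *\<^sub>R u1 t
        + gradf (u t + (t / 4) *\<^sub>R u1 t) = 0"
begin

lemma has_vector_derivatives:
  assumes "t0 < t"
  shows "(u has_vector_derivative u1 t) (at t)" "(u1 has_vector_derivative u2 t) (at t)"
    "(u2 has_vector_derivative u3 t) (at t)"
proof -
  have "t0 \<le> t" using assms by simp
  thus "(u has_vector_derivative u1 t) (at t)" "(u1 has_vector_derivative u2 t) (at t)"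
    "(u2 has_vector_derivative u3 t) (at t)"
    using has_vector_derivative_at_if_within_atLeast[OF _ assms] d1 d2 d3 by blast+
qed

lemma rescaled_has_vector_derivative:
  assumes t: "t0 < t"
  shows "((\<lambda>t. u t + (t / 4) *\<^sub>R u1 t) has_vector_derivative (5/4) *\<^sub>R u1 t + (t / 4) *\<^sub>R u2 t) (at t)"
proof -
  have "((\<lambda>s. u s + (s / 4) *\<^sub>R u1 s) has_vector_derivative
      u1 t + ((t / 4) *\<^sub>R u2 t + (1 / 4) *\<^sub>R u1 t)) (at t)"
    using has_vector_derivatives[OF t]
    by (intro has_vector_derivative_add has_vector_derivative_scaleR) (auto intro!: derivative_eq_intros)
  moreover have "u1 t + ((t / 4) *\<^sub>R u2 t + (1 / 4) *\<^sub>R u1 t) = (5/4) *\<^sub>R u1 t + (t / 4) *\<^sub>R u2 t"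
    using scaleR_add_left[of 1 "1/4" "u1 t"] by (simp add: algebra_simps)
  ultimately show ?thesis by simp
qed

lemma rescaled_velocity_has_vector_derivative:
  assumes t: "t0 < t"
  shows "((\<lambda>t. (5/4) *\<^sub>R u1 t + (t / 4) *\<^sub>R u2 t) has_vector_derivative
    (3/2) *\<^sub>R u2 t + (t / 4) *\<^sub>R u3 t) (at t)"
proof -
  have "((\<lambda>s. (5/4) *\<^sub>R u1 s + (s / 4) *\<^sub>R u2 s) has_vector_derivative
      (5/4) *\<^sub>R u2 t + ((t / 4) *\<^sub>R u3 t + (1 / 4) *\<^sub>R u2 t)) (at t)"
    using has_vector_derivatives[OF t]
    by (intro has_vector_derivative_add has_vector_derivative_scaleR) (auto intro!: derivative_eq_intros)
  moreover have "(5/4) *\<^sub>R u2 t + ((t / 4) *\<^sub>R u3 t + (1 / 4) *\<^sub>R u2 t) = (3/2) *\<^sub>R u2 t + (t / 4) *\<^sub>R u3 t"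
    using scaleR_add_left[of "5/4" "1/4" "u2 t"] by (simp add: algebra_simps)
  ultimately show ?thesis by simp
qed

lemma rescaled_equation:
  assumes t: "t0 < t"
  shows "t *\<^sub>R ((3/2) *\<^sub>R u2 t + (t / 4) *\<^sub>R u3 t) + (\<alpha> + 1) *\<^sub>R ((5/4) *\<^sub>R u1 t + (t / 4) *\<^sub>R u2 t)
    + (t\<^sup>2 / 4) *\<^sub>R gradf (u t + (t / 4) *\<^sub>R u1 t) = 0"
proof -
  have tp: "t > 0" using t t0_pos by simp
  have c1: "(t\<^sup>2 / 4) * ((\<alpha> + 7) / t) = t * (3/2) + (\<alpha> + 1) * (t / 4)"
    and c2: "(t\<^sup>2 / 4) * (5 * (\<alpha> + 1) / t\<^sup>2) = (\<alpha> + 1) * (5/4)"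
    and c3: "t\<^sup>2 / 4 = t * (t / 4)"
    using tp by (simp_all add: field_simps power2_eq_square)
  have "(t\<^sup>2 / 4) *\<^sub>R (u3 t + ((\<alpha> + 7) / t) *\<^sub>R u2 t + (5 * (\<alpha> + 1) / t\<^sup>2) *\<^sub>R u1 t
        + gradf (u t + (t / 4) *\<^sub>R u1 t))
      = t *\<^sub>R ((3/2) *\<^sub>R u2 t + (t / 4) *\<^sub>R u3 t) + (\<alpha> + 1) *\<^sub>R ((5/4) *\<^sub>R u1 t + (t / 4) *\<^sub>R u2 t)
        + (t\<^sup>2 / 4) *\<^sub>R gradf (u t + (t / 4) *\<^sub>R u1 t)"
    unfolding scaleR_add_right scaleR_scaleR c1 c2 by (simp add: c3 scaleR_add_left algebra_simps)
  thus ?thesis using ode[of t] t by simp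
qed

sublocale rescaled: rescaled_gradient_system f gradf "\<lambda>t. u t + (t / 4) *\<^sub>R u1 t"
  "\<lambda>t. (5/4) *\<^sub>R u1 t + (t / 4) *\<^sub>R u2 t" "\<lambda>t. (3/2) *\<^sub>R u2 t + (t / 4) *\<^sub>R u3 t" t0 \<alpha>
  by unfold_locales (fact convex grad argmin_ne t0_pos rescaled_has_vector_derivative
      rescaled_velocity_has_vector_derivative rescaled_equation)+

lemma value_gap_has_real_derivative:
  assumes "t0 < t"
  shows "((\<lambda>s. f (u s) - Inf (range f)) has_real_derivative inner (gradf (u t)) (u1 t)) (at t)"
  using DERIV_diff[OF has_real_derivative_gradient_comp[OF grad has_vector_derivatives(1)[OF assms]]
      DERIV_const] by simp

lemma value_gap_averaged: "f (u t) - Inf (range f) + t / 4 * inner (gradf (u t)) (u1 t) \<le> rescaled.gap t"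
  using convex_gradient_inequality[OF convex grad, of "u t" "u t + (t / 4) *\<^sub>R u1 t"]
  by (simp add: rescaled.gap_def)

lemma value_gap_nonneg: "0 \<le> f (u t) - Inf (range f)"
  using Inf_range_le_if_argmin_set_nonempty[OF argmin_ne] by simp

lemma value_gap_bigo:
  assumes "3 \<le> \<alpha>"
  shows "(\<lambda>t. f (u t) - Inf (range f)) \<in> O[at_top](\<lambda>t. 1 / t ^ 3)"
  using t0_pos value_gap_has_real_derivative
  by (intro averaged_bigo_imp_bigo[where T="t0 + 1", OF _ value_gap_nonneg _ value_gap_averaged
        rescaled.gap_bigo[OF assms]]) auto

lemma value_gap_smallo:
  assumes "3 < \<alpha>"
  shows "(\<lambda>t. f (u t) - Inf (range f)) \<in> o[at_top](\<lambda>t. 1 / t ^ 3)"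
  using t0_pos value_gap_has_real_derivative
  by (intro averaged_smallo_imp_smallo[where T="t0 + 1", OF _ value_gap_nonneg _ value_gap_averaged
        rescaled.gap_smallo[OF assms]]) auto

lemma weakly_convergent:
  assumes "3 < \<alpha>"
  shows "\<exists>q\<in>argmin_set f. weakly_tendsto_at_top u q"
proof -
  obtain q where q: "q \<in> argmin_set f"
    and lim: "\<And>y. ((\<lambda>t. inner (u t + (t / 4) *\<^sub>R u1 t) y) \<longlongrightarrow> inner q y) at_top"
    using rescaled.weakly_convergent[OF assms] by blast
  have "((\<lambda>t. inner (u t) y) \<longlongrightarrow> inner q y) at_top" for y
    by (rule tendsto_inner_if_averaged_tendsto[of 4 "t0 + 1" u u1, OF _ _ _ lim])
      (use has_vector_derivatives(1) t0_pos in auto)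
  thus ?thesis using q unfolding weakly_tendsto_at_top_def by blast
qed

end

theorem theorem2p1:
  fixes f :: "'a::{real_inner, complete_space} \<Rightarrow> real"
    and gradf :: "'a \<Rightarrow> 'a"
    and u u1 u2 u3 :: "real \<Rightarrow> 'a"
    and t0 \<alpha> :: real
  assumes convex: "convex_on UNIV f"
    and grad: "\<And>x. (f has_derivative (\<lambda>h. inner (gradf x) h)) (at x)"
    and grad_cont: "continuous_on UNIV gradf"
    and argmin_ne: "argmin_set f \<noteq> {}"
    and t0_pos: "t0 > 0"
    and alpha_nonneg: "\<alpha> \<ge> 0"
    and d1: "\<And>t. t \<ge> t0 \<Longrightarrow> (u has_vector_derivative u1 t) (at t within {t0..})"
    and d2: "\<And>t. t \<ge> t0 \<Longrightarrow> (u1 has_vector_derivative u2 t) (at t within {t0..})"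
    and d3: "\<And>t. t \<ge> t0 \<Longrightarrow> (u2 has_vector_derivative u3 t) (at t within {t0..})"
    and u3_cont: "continuous_on {t0..} u3"
    and ode: "\<And>t. t \<ge> t0 \<Longrightarrow>
      u3 t + ((\<alpha> + 7) / t) *\<^sub>R u2 t + (5 * (\<alpha> + 1) / t\<^sup>2) *\<^sub>R u1 t
        + gradf (u t + (t / 4) *\<^sub>R u1 t) = 0"
  shows "(\<alpha> \<ge> 3 \<longrightarrow>
            (\<lambda>t. f (u t + (t / 4) *\<^sub>R u1 t) - Inf (range f)) \<in> O[at_top](\<lambda>t. 1 / t ^ 3) \<and>
            (\<lambda>t. f (u t) - Inf (range f)) \<in> O[at_top](\<lambda>t. 1 / t ^ 3))
       \<and> (\<alpha> > 3 \<longrightarrow>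
            (\<lambda>t. f (u t + (t / 4) *\<^sub>R u1 t) - Inf (range f)) \<in> o[at_top](\<lambda>t. 1 / t ^ 3) \<and>
            (\<lambda>t. f (u t) - Inf (range f)) \<in> o[at_top](\<lambda>t. 1 / t ^ 3) \<and>
            (\<exists>u_inf \<in> argmin_set f. weakly_tendsto_at_top u u_inf))"
proof -
  interpret toges f gradf u u1 u2 u3 t0 \<alpha>
    by unfold_locales (fact convex grad argmin_ne t0_pos d1 d2 d3 ode)+
  have "(\<lambda>t. f (u t + (t / 4) *\<^sub>R u1 t) - Inf (range f)) = rescaled.gap"
    by (simp add: fun_eq_iff rescaled.gap_def)
  thus ?thesis
    using rescaled.gap_bigo rescaled.gap_smallo value_gap_bigo value_gap_smallo weakly_convergent
    by auto
qed

end
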